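(* Let $G$ be a group, $F$ a field of characteristic $0$, and let $R=M_n(F)$ carry the elementary $G$-grading induced by an $n$-tuple $(g_1,\dots,g_n)$ of pairwise distinct elements of $G$. Let $m=x_1x_2\cdots x_k$ be a multilinear graded monomial with $\deg x_1\cdot\deg x_2\cdots\deg x_k=1_G$ which is a graded identity of $R$. Then $m'=x_2\cdots x_k$ is also a graded identity of $R$ (and hence $m$ lies in the $T_G$-ideal generated by $m'$).
   Context: The elementary $G$-grading on $M_n(F)$ induced by $(g_1,\dots,g_n)\in G^n$ is $R_g=\mathrm{span}\{e_{pq}: g_p^{-1}g_q=g\}$. Graded polynomials live in the free $G$-graded algebra on variables each having a prescribed degree in $G$; a graded polynomial $f(x_1,\dots,x_r)$ is a graded identity of $R$ if it vanishes under every substitution $x_i\mapsto a_i\in R_{\deg x_i}$. A $T_G$-ideal is an ideal of the free $G$-graded algebra invariant under all degree-preserving endomorphisms. *)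

theory Defs
  imports "HOL-Analysis.Analysis"
begin

text \<open>Homogeneous component of degree h of the elementary G-grading on M_n(F)
  induced by the tuple g (group G written additively, possibly non-commutative):
  R_h = span of e_pq with g_p^{-1} g_q = h, i.e. matrices supported on such (p,q).\<close>
definition elem_hcomp :: "('n::finite \<Rightarrow> 'g::group_add) \<Rightarrow> 'g \<Rightarrow> ('a::zero^'n^'n) set" where
  "elem_hcomp g h = {A. \<forall>p q. A $ p $ q \<noteq> 0 \<longrightarrow> - g p + g q = h}"

definition mat_prod_list :: "('a::semiring_1^'n^'n) list \<Rightarrow> 'a^'n^'n" where
  "mat_prod_list As = foldr (\<lambda>A B. A ** B) As (mat 1)"

end

theory Submission
  imports Defs
begin

text \<open>The product of the homogeneous factors x_2 \<dots> x_k lies in the component of degree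
  s = deg x_2 \<cdots> deg x_k = (deg x_1)\<inverse>. If it were nonzero, some entry (p,q) would be nonzero,
  so g_p\<inverse> g_q = s; then the matrix unit e_qp has degree g_q\<inverse> g_p = s\<inverse> = deg x_1, and
  substituting it for x_1 gives a product with nonzero (q,q) entry, contradicting that m is
  an identity.\<close>

lemma elem_hcomp_mult:
  fixes A B :: "'a::semiring_1^'n::finite^'n"
  assumes "A \<in> elem_hcomp g h" "B \<in> elem_hcomp g h'"
  shows "A ** B \<in> elem_hcomp g (h + h')"
  unfolding elem_hcomp_def
proof (intro CollectI allI impI)
  fix p q
  assume "(A ** B) $ p $ q \<noteq> 0"
  then obtain r where "A $ p $ r * B $ r $ q \<noteq> 0"
    by (metis (no_types, lifting) matrix_matrix_mult_def sum.neutral vec_lambda_beta)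
  then have "A $ p $ r \<noteq> 0" "B $ r $ q \<noteq> 0"
    by auto
  then have "- g p + g r = h" "- g r + g q = h'"
    using assms unfolding elem_hcomp_def by blast+
  then show "- g p + g q = h + h'"
    by (auto simp: add.assoc[symmetric])
qed

lemma mat_one_in_elem_hcomp: "(mat 1 :: 'a::semiring_1^'n::finite^'n) \<in> elem_hcomp g 0"
  unfolding elem_hcomp_def by (auto simp: mat_def)

lemma mat_prod_list_Cons: "mat_prod_list (A # As) = A ** mat_prod_list As"
  by (simp add: mat_prod_list_def)

lemma mat_prod_list_in_elem_hcomp:
  fixes a :: "nat \<Rightarrow> 'a::semiring_1^'n::finite^'n"
  assumes "\<forall>i\<in>set xs. a i \<in> elem_hcomp g (d i)"
  shows "mat_prod_list (map a xs) \<in> elem_hcomp g (sum_list (map d xs))"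
  using assms
proof (induction xs)
  case Nil
  then show ?case by (simp add: mat_prod_list_def mat_one_in_elem_hcomp)
next
  case (Cons x xs)
  then show ?case by (simp add: mat_prod_list_Cons elem_hcomp_mult)
qed

lemma mat_one_neq_zero: "(mat 1 :: 'a::zero_neq_one^'n::finite^'n) \<noteq> 0"
proof
  assume "mat 1 = (0 :: 'a^'n^'n)"
  then have "(mat 1 :: 'a^'n^'n) $ undefined $ undefined = 0" by simp
  then show False by (simp add: mat_def)
qed

definition mat_unit :: "'n::finite \<Rightarrow> 'n \<Rightarrow> 'a::zero_neq_one^'n^'n" where
  "mat_unit p q = (\<chi> i j. if i = p \<and> j = q then 1 else 0)"

lemma mat_unit_in_elem_hcomp: "mat_unit p q \<in> elem_hcomp g (- g p + g q)"
  unfolding elem_hcomp_def mat_unit_def by auto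

lemma mat_unit_mult_nth: "(mat_unit p q ** A) $ p $ r = (A $ q $ r :: 'a::semiring_1)"
  by (simp add: matrix_matrix_mult_def mat_unit_def if_distrib[of "\<lambda>x. x * _"] cong: if_cong)

lemma elem_hcomp_eq_0_if_left_annihilated:
  fixes A :: "'a::semiring_1^'n::finite^'n"
  assumes "A \<in> elem_hcomp g s" "\<And>E. E \<in> elem_hcomp g (- s) \<Longrightarrow> E ** A = 0"
  shows "A = 0"
proof (rule ccontr)
  assume "A \<noteq> 0"
  then obtain p q where pq: "A $ p $ q \<noteq> 0"
    by (metis vec_eq_iff zero_index)
  then have "- g p + g q = s"
    using assms(1) unfolding elem_hcomp_def by auto
  then have "- g q + g p = - s"
    by (auto simp: minus_add)
  then have "mat_unit q p \<in> elem_hcomp g (- s)"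
    using mat_unit_in_elem_hcomp by metis
  moreover have "(mat_unit q p ** A) $ q $ q \<noteq> 0"
    using pq by (simp add: mat_unit_mult_nth)
  ultimately show False
    using assms(2) by fastforce
qed

theorem mainTheorem3:
  fixes g :: "'n::finite \<Rightarrow> 'g::group_add"
    and d :: "nat \<Rightarrow> 'g"
    and k :: nat
  assumes distinct: "inj g"
    and deg_one: "sum_list (map d [1..<k+1]) = 0"
    and m_identity: "\<forall>a :: nat \<Rightarrow> ('a::field_char_0)^'n^'n.
           (\<forall>i\<in>{1..k}. a i \<in> elem_hcomp g (d i)) \<longrightarrow> mat_prod_list (map a [1..<k+1]) = 0"
  shows "\<forall>a :: nat \<Rightarrow> 'a^'n^'n.
           (\<forall>i\<in>{2..k}. a i \<in> elem_hcomp g (d i)) \<longrightarrow> mat_prod_list (map a [2..<k+1]) = 0"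
proof (intro allI impI)
  fix a :: "nat \<Rightarrow> 'a^'n^'n"
  assume a_hom: "\<forall>i\<in>{2..k}. a i \<in> elem_hcomp g (d i)"
  have "k \<noteq> 0"
    using m_identity[rule_format, of a] mat_one_neq_zero[where 'a='a and 'n='n]
    by (cases k) (auto simp: mat_prod_list_def)
  then have split: "[1..<k+1] = 1 # [2..<k+1]"
    by (simp add: upt_conv_Cons numeral_2_eq_2)
  define s where "s = sum_list (map d [2..<k+1])"
  have "mat_prod_list (map a [2..<k+1]) \<in> elem_hcomp g s"
    unfolding s_def using a_hom by (intro mat_prod_list_in_elem_hcomp) auto
  moreover have "d 1 = - s"
  proof -
    have "d 1 + s = 0"
      using deg_one unfolding split s_def by simp
    then show ?thesis
      by (simp add: eq_neg_iff_add_eq_0)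
  qed
  moreover have "E ** mat_prod_list (map a [2..<k+1]) = 0" if "E \<in> elem_hcomp g (d 1)" for E
  proof -
    have "\<forall>i\<in>{1..k}. (a(1 := E)) i \<in> elem_hcomp g (d i)"
      using a_hom that by (auto simp: le_Suc_eq numeral_2_eq_2 dest: le_neq_implies_less)
    then have "mat_prod_list (map (a(1 := E)) [1..<k+1]) = 0"
      using m_identity by blast
    moreover have "map (a(1 := E)) [2..<k+1] = map a [2..<k+1]"
      by simp
    ultimately show ?thesis
      unfolding split by (simp only: list.map mat_prod_list_Cons fun_upd_same)
  qed
  ultimately show "mat_prod_list (map a [2..<k+1]) = 0"
    using elem_hcomp_eq_0_if_left_annihilated by metis
qed

end
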